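(* Let $p$ be a prime and $b$ an integer with $1<b<p$. Write $p=bq+r$ with $0\le r<b$ and $p=b^{-1}s+t$ with $0\le t<b^{-1}$ (division algorithm). Then $$\{x_1^{p-kb}x_2^k\mid 0\le k\le q\}\cap\{x_1^mx_2^{p-mb^{-1}}\mid 0\le m\le s-1\}=\emptyset.$$
   Context: $x_1,x_2$ are variables of the polynomial ring $\mathbb{C}[x_1,x_2]$. $b^{-1}$ is the unique integer $0<b^{-1}<p$ with $bb^{-1}\equiv1\pmod p$. *)

theory Defs
  imports "HOL-Number_Theory.Number_Theory"
begin

definition modinv :: "nat \<Rightarrow> nat \<Rightarrow> nat" where
  "modinv p b = (THE c. 0 < c \<and> c < p \<and> [b * c = 1] (mod p))"

text \<open>A monomial x1^a * x2^c in C[x1,x2] is identified with its exponent pair (a, c);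
  two monomials are equal iff their exponent pairs are equal.\<close>
type_synonym monomial2 = "nat \<times> nat"

definition mono2 :: "nat \<Rightarrow> nat \<Rightarrow> monomial2" where
  "mono2 a c = (a, c)"

end

theory Submission
  imports Defs
begin

text \<open>A common monomial would give exponents with \<open>m + k b = p\<close> and \<open>k + m c = p\<close>, where
  \<open>c = b\<^sup>-\<^sup>1\<close>. Eliminating \<open>m\<close> yields \<open>p + k b c = p c + k\<close>; since \<open>b c \<equiv> 1 (mod p)\<close> and
  \<open>b c > 1\<close> we have \<open>b c > p\<close>, which forces \<open>k < c\<close>. Then \<open>p = m c + k\<close> is the division of
  \<open>p\<close> by \<open>c\<close>, so \<open>m = s\<close>, contradicting \<open>m \<le> s - 1\<close>.\<close>

lemma modinv_spec:
  fixes p b :: nat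
  assumes "1 < p" and "coprime b p"
  shows "0 < modinv p b \<and> modinv p b < p \<and> [b * modinv p b = 1] (mod p)"
proof -
  obtain c0 where "[b * c0 = 1] (mod p)"
    using cong_solve_coprime_nat[OF assms(2)] by auto
  then have inverse: "[b * (c0 mod p) = 1] (mod p)"
    by (simp add: cong_def mod_mult_right_eq)
  moreover have "c0 mod p \<noteq> 0"
  proof
    assume "c0 mod p = 0"
    with inverse have "[0 = 1] (mod p)"
      by simp
    with assms(1) show False
      by (simp add: cong_def)
  qed
  moreover have "c0 mod p < p"
    using assms(1) by simp
  moreover have "d = e"
    if "d < p" "[b * d = 1] (mod p)" "e < p" "[b * e = 1] (mod p)" for d e
  proof -
    have "[b * d = b * e] (mod p)"
      using cong_trans[OF that(2) cong_sym[OF that(4)]] .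
    then have "[d = e] (mod p)"
      using assms(2) cong_mult_lcancel_nat by blast
    then show ?thesis
      using that cong_less_modulus_unique_nat by blast
  qed
  ultimately have "\<exists>!c. 0 < c \<and> c < p \<and> [b * c = 1] (mod p)"
    by (intro ex1I[of _ "c0 mod p"]) blast+
  then show ?thesis
    unfolding modinv_def by (rule theI')
qed

lemma modulus_less_if_cong_1:
  fixes n p :: nat
  assumes "[n = 1] (mod p)" and "1 < n"
  shows "p < n"
proof -
  have "p dvd n - 1"
    using assms(1) by (rule cong_to_1_nat)
  then have "p \<le> n - 1"
    using assms(2) by (intro dvd_imp_le) auto
  then show ?thesis
    using assms(2) by linarith
qed

lemma less_if_add_mult_eqs:
  fixes b c k m p :: nat
  assumes m: "m + k * b = p" and k: "k + m * c = p" and "p < b * c"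
  shows "k < c"
proof (cases "p = 0")
  case True
  then show ?thesis
    using k \<open>p < b * c\<close> by auto
next
  case False
  have "p + k * (b * c) = (m + k * b) * c + k"
    using k by (simp add: algebra_simps)
  also have "\<dots> = p * c + k"
    using m by simp
  finally have "p + k * (b * c) = p * c + k" .
  moreover have "k * (p + 1) \<le> k * (b * c)"
    using \<open>p < b * c\<close> by (intro mult_le_mono2) simp
  ultimately have "p * (k + 1) \<le> p * c"
    by (simp add: algebra_simps)
  then have "k + 1 \<le> c"
    using False by (simp only: mult_le_cancel1)
  then show ?thesis
    by simp
qed

lemma modinv_prime_bounds:
  fixes p b :: nat
  assumes "prime p" and "1 < b" and "b < p"
  shows "0 < modinv p b" and "modinv p b < p" and "p < b * modinv p b"
proof -
  have "\<not> p dvd b"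
    using assms by (auto dest: dvd_imp_le)
  then have "coprime b p"
    using prime_imp_coprime_nat[OF \<open>prime p\<close>] coprime_commute by blast
  with prime_gt_1_nat[OF \<open>prime p\<close>]
  have c: "0 < modinv p b" "modinv p b < p" "[b * modinv p b = 1] (mod p)"
    using modinv_spec by simp_all
  then show "0 < modinv p b" and "modinv p b < p"
    by simp_all
  have "1 < b * modinv p b"
    using \<open>1 < b\<close> c(1) less_le_trans[of 1 b "b * modinv p b"] by simp
  with c(3) show "p < b * modinv p b"
    by (rule modulus_less_if_cong_1)
qed

theorem lemma3p10:
  fixes p b :: nat
  assumes "prime p" and "1 < b" and "b < p"
  defines "q \<equiv> p div b"
      and "s \<equiv> p div modinv p b"
  shows "{mono2 (p - k * b) k | k. k \<le> q} \<inter>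
         {mono2 m (p - m * modinv p b) | m. m \<le> s - 1} = {}"
proof -
  define c where "c = modinv p b"
  have c: "0 < c" "c < p" "p < b * c"
    using modinv_prime_bounds[OF assms(1-3)] unfolding c_def by simp_all
  have False if "k \<le> q" "m \<le> s - 1" "mono2 (p - k * b) k = mono2 m (p - m * c)" for k m
  proof -
    have "0 < s"
      using c(1,2) unfolding s_def c_def[symmetric] by (simp add: div_greater_zero_iff)
    have "m \<le> p div c"
      using that(2) unfolding s_def c_def by simp
    then have "m * c \<le> p"
      using c(1) by (simp add: less_eq_div_iff_mult_less_eq)
    moreover have "k * b \<le> p"
      using that(1) \<open>1 < b\<close> unfolding q_def by (simp add: less_eq_div_iff_mult_less_eq)
    ultimately have "m + k * b = p" and decomp: "k + m * c = p"
      using that(3) unfolding mono2_def by auto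
    then have "k < c"
      using c(3) by (rule less_if_add_mult_eqs)
    then have "p div c = m"
      unfolding decomp[symmetric] by simp
    with that(2) \<open>0 < s\<close> show False
      unfolding s_def c_def by simp
  qed
  then show ?thesis
    unfolding c_def by blast
qed

end
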